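(* Let $n\ge3$. An oriented cycle $\overrightarrow{C_n}$ is $\{1\}$-antimagic if and only if it is unidirectional or $\Theta$-oriented.
   Context: An oriented graph is a simple graph each of whose edges is given one direction (an arc $(u,v)$ goes from $u$ to $v$). For vertices $u,v$, $d(u,v)$ is the length of a shortest directed path from $u$ to $v$ ($d(u,u)=0$, $\infty$ if no path). For a set $D$ of nonnegative integers, $N_D(v)=\{y : d(v,y)\in D\}$; for a bijection $f:V\to\{1,\dots,|V|\}$, $\omega_D(v)=\sum_{x\in N_D(v)}f(x)$ (empty sum $0$); $f$ is $D$-antimagic if distinct vertices have distinct $D$-weights, and the graph is $D$-antimagic if such an $f$ exists. A source is a vertex of in-degree $0$, a sink a vertex of out-degree $0$. An oriented cycle $\overrightarrow{C_n}$ is an orientation of the cycle on $v_1,\dots,v_n$. It is unidirectional if (up to relabeling) its arcs are $(v_i,v_{i+1})$, $1\le i\le n-1$, and $(v_n,v_1)$. It is $\Theta$-oriented if it has exactly one source and exactly one sink and these two vertices are adjacent; up to relabeling its arcs are $(v_i,v_{i+1})$, $1\le i\le n-1$, and $(v_1,v_n)$. *)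

theory Defs
  imports Main "HOL-Library.Extended_Nat"
begin

definition dist :: "('a \<times> 'a) set \<Rightarrow> 'a \<Rightarrow> 'a \<Rightarrow> enat" where
  "dist A u v = (if \<exists>k. (u, v) \<in> A ^^ k then enat (LEAST k. (u, v) \<in> A ^^ k) else \<infinity>)"

definition nbhdD :: "'a set \<Rightarrow> ('a \<times> 'a) set \<Rightarrow> nat set \<Rightarrow> 'a \<Rightarrow> 'a set" where
  "nbhdD V A D v = {y \<in> V. \<exists>k\<in>D. dist A v y = enat k}"

definition weightD :: "'a set \<Rightarrow> ('a \<times> 'a) set \<Rightarrow> nat set \<Rightarrow> ('a \<Rightarrow> nat) \<Rightarrow> 'a \<Rightarrow> nat" where
  "weightD V A D f v = (\<Sum>x\<in>nbhdD V A D v. f x)"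

definition D_antimagic_labeling :: "'a set \<Rightarrow> ('a \<times> 'a) set \<Rightarrow> nat set \<Rightarrow> ('a \<Rightarrow> nat) \<Rightarrow> bool" where
  "D_antimagic_labeling V A D f \<longleftrightarrow>
     bij_betw f V {1..card V} \<and> inj_on (weightD V A D f) V"

definition D_antimagic :: "'a set \<Rightarrow> ('a \<times> 'a) set \<Rightarrow> nat set \<Rightarrow> bool" where
  "D_antimagic V A D \<longleftrightarrow> (\<exists>f. D_antimagic_labeling V A D f)"

definition is_source :: "'a set \<Rightarrow> ('a \<times> 'a) set \<Rightarrow> 'a \<Rightarrow> bool" where
  "is_source V A v \<longleftrightarrow> v \<in> V \<and> (\<forall>u\<in>V. (u, v) \<notin> A)"

definition is_sink :: "'a set \<Rightarrow> ('a \<times> 'a) set \<Rightarrow> 'a \<Rightarrow> bool" where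
  "is_sink V A v \<longleftrightarrow> v \<in> V \<and> (\<forall>u\<in>V. (v, u) \<notin> A)"

definition oriented_cycle :: "nat \<Rightarrow> (nat \<times> nat) set \<Rightarrow> bool" where
  "oriented_cycle n A \<longleftrightarrow>
     (\<forall>i<n. ((i, Suc i mod n) \<in> A) \<noteq> ((Suc i mod n, i) \<in> A)) \<and>
     A \<subseteq> {(i, Suc i mod n) | i. i < n} \<union> {(Suc i mod n, i) | i. i < n}"

definition unidirectional :: "nat \<Rightarrow> (nat \<times> nat) set \<Rightarrow> bool" where
  "unidirectional n A \<longleftrightarrow>
     (\<exists>\<sigma>. bij_betw \<sigma> {0..<n} {0..<n} \<and> A = {(\<sigma> i, \<sigma> (Suc i mod n)) | i. i < n})"

definition theta_oriented :: "nat \<Rightarrow> (nat \<times> nat) set \<Rightarrow> bool" where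
  "theta_oriented n A \<longleftrightarrow>
     (\<exists>s t. {v. is_source {0..<n} A v} = {s} \<and> {v. is_sink {0..<n} A v} = {t} \<and>
            ((s, t) \<in> A \<or> (t, s) \<in> A))"

end

theory Submission
  imports Defs "HOL-Combinatorics.Transposition"
begin

text \<open>For \<open>D = {1}\<close> the weight of a vertex is the sum of the labels of its out-neighbours,
  and on a cycle every vertex has at most two of them. Sinks have weight 0, so an antimagic
  orientation has at most one sink. If the cycle is not unidirectional it has a sink \<open>t\<close>;
  both neighbours of \<open>t\<close> point to it, and if neither were a source both would have
  out-neighbourhood \<open>{t}\<close> and hence equal weights. So a source is adjacent to \<open>t\<close>, and it
  is the only source, because two sources cut the cycle into two paths each containing a sink.

  Conversely, on a unidirectional cycle the weight of a vertex is the label of its unique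
  successor. On a \<open>\<Theta>\<close>-oriented cycle with source \<open>s\<close> and sink \<open>t\<close>, give \<open>t\<close> the
  largest label \<open>n\<close>: then \<open>s\<close> is the only vertex of weight above \<open>n\<close>, \<open>t\<close> the only one of
  weight 0, and two further vertices with the same weight share their single out-neighbour,
  which must then be \<open>t\<close>; but the in-neighbours of \<open>t\<close> are \<open>s\<close> and just one other vertex.\<close>

lemma ex_switch_point:
  fixes P :: "nat \<Rightarrow> bool"
  assumes "a \<le> m" "P a" "\<not> P m"
  shows "\<exists>k. a \<le> k \<and> k < m \<and> P k \<and> \<not> P (Suc k)"
  using assms
proof (induction m rule: dec_induct)
  case (step m)
  then show ?case by (cases "P m") (auto intro: less_SucI)
qed simp

lemma dist_eq_1_iff:
  assumes "irrefl A"
  shows "dist A v y = enat 1 \<longleftrightarrow> (v, y) \<in> A"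
proof
  assume d: "dist A v y = enat 1"
  then have ex: "\<exists>k. (v, y) \<in> A ^^ k" by (auto simp: dist_def split: if_splits)
  with d have "(LEAST k. (v, y) \<in> A ^^ k) = 1" by (simp add: dist_def)
  with LeastI_ex[OF ex] show "(v, y) \<in> A" by simp
next
  assume vy: "(v, y) \<in> A"
  with assms have "(LEAST k. (v, y) \<in> A ^^ k) = 1"
    by (intro Least_equality) (auto simp: irrefl_def Suc_le_eq gr0_conv_Suc[symmetric] intro: ccontr)
  with vy show "dist A v y = enat 1"
    by (auto simp: dist_def intro: exI[of _ 1])
qed

lemma weightD_1_eq_sum_out:
  assumes "irrefl A" "A \<subseteq> V \<times> V"
  shows "weightD V A {1} f v = (\<Sum>y\<in>A `` {v}. f y)"
proof -
  have "nbhdD V A {1} v = A `` {v}"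
    using assms dist_eq_1_iff[OF assms(1)] by (auto simp: nbhdD_def)
  then show ?thesis by (simp add: weightD_def)
qed

lemma mod_add_cancel_nat:
  fixes b j k n :: nat
  assumes "j < n" "k < n" "(b + j) mod n = (b + k) mod n"
  shows "j = k"
proof -
  have "j \<le> k \<Longrightarrow> j = k" if "j < n" "k < n" "(b + j) mod n = (b + k) mod n" for j k
    using that mod_eq_dvd_iff_nat[of "b + j" "b + k" n] by (auto dest!: dvd_imp_le)
  from this[of j k] this[of k j] assms show ?thesis by linarith
qed

locale oriented_cycle_graph =
  fixes n :: nat and A :: "(nat \<times> nat) set"
  assumes three_le_n: "3 \<le> n" and oriented: "oriented_cycle n A"
begin

abbreviation source :: "nat \<Rightarrow> bool" where "source \<equiv> is_source {0..<n} A"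
abbreviation sink :: "nat \<Rightarrow> bool" where "sink \<equiv> is_sink {0..<n} A"

definition cyc_add :: "nat \<Rightarrow> nat \<Rightarrow> nat" where "cyc_add b k = (b + k) mod n"

definition cyc_succ :: "nat \<Rightarrow> nat" where "cyc_succ u = cyc_add u 1"
definition cyc_pred :: "nat \<Rightarrow> nat" where "cyc_pred u = cyc_add u (n - 1)"

lemma cyc_add_lt: "cyc_add b k < n"
  using three_le_n by (simp add: cyc_add_def)

lemma cyc_add_0: "b < n \<Longrightarrow> cyc_add b 0 = b"
  by (simp add: cyc_add_def)

lemma cyc_add_n: "b < n \<Longrightarrow> cyc_add b n = b"
  by (simp add: cyc_add_def)

lemma cyc_add_add: "cyc_add (cyc_add b j) k = cyc_add b (j + k)"
  by (simp add: cyc_add_def mod_add_left_eq add.assoc)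

lemma cyc_succ_eq: "cyc_succ u = Suc u mod n"
  by (simp add: cyc_succ_def cyc_add_def)

lemma cyc_succ_lt: "cyc_succ u < n"
  by (simp add: cyc_succ_def cyc_add_lt)

lemma cyc_pred_lt: "cyc_pred u < n"
  by (simp add: cyc_pred_def cyc_add_lt)

lemma cyc_succ_add: "cyc_succ (cyc_add b k) = cyc_add b (Suc k)"
  by (simp add: cyc_succ_def cyc_add_add)

lemma cyc_add_inj: "j < n \<Longrightarrow> k < n \<Longrightarrow> cyc_add b j = cyc_add b k \<Longrightarrow> j = k"
  unfolding cyc_add_def by (rule mod_add_cancel_nat)

lemma cyc_add_surj: "b < n \<Longrightarrow> v < n \<Longrightarrow> \<exists>k<n. v = cyc_add b k"
  by (rule exI[of _ "(v + n - b) mod n"]) (auto simp: cyc_add_def mod_add_right_eq)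

lemma cyc_pred_succ: "u < n \<Longrightarrow> cyc_pred (cyc_succ u) = u"
  using three_le_n by (simp add: cyc_succ_def cyc_pred_def cyc_add_add cyc_add_n)

lemma cyc_succ_pred: "u < n \<Longrightarrow> cyc_succ (cyc_pred u) = u"
  using three_le_n by (simp add: cyc_succ_def cyc_pred_def cyc_add_add cyc_add_n)

lemma cyc_succ_neq_pred: "cyc_succ u \<noteq> cyc_pred u"
  using cyc_add_inj[of 1 "n - 1" u] three_le_n by (auto simp: cyc_succ_def cyc_pred_def)

lemma arc_cases:
  assumes "(u, v) \<in> A"
  shows "u < n \<and> v < n \<and> (v = cyc_succ u \<or> u = cyc_succ v)"
proof -
  obtain i where "i < n" "(u, v) = (i, Suc i mod n) \<or> (u, v) = (Suc i mod n, i)"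
    using assms oriented unfolding oriented_cycle_def by blast
  then show ?thesis by (auto simp: cyc_succ_eq)
qed

lemma cycle_edge: "u < n \<Longrightarrow> ((u, cyc_succ u) \<in> A) \<noteq> ((cyc_succ u, u) \<in> A)"
  using oriented unfolding oriented_cycle_def cyc_succ_eq by blast

lemma cycle_edge_pred: "u < n \<Longrightarrow> ((cyc_pred u, u) \<in> A) \<noteq> ((u, cyc_pred u) \<in> A)"
  using cycle_edge[OF cyc_pred_lt, of u] by (simp add: cyc_succ_pred)

lemma arc_antisym: "(u, v) \<in> A \<Longrightarrow> (v, u) \<notin> A"
  using arc_cases cycle_edge by blast

lemma irrefl_arcs: "irrefl A"
  unfolding irrefl_def using arc_antisym by blast

lemma arcs_subset: "A \<subseteq> {0..<n} \<times> {0..<n}"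
  using arc_cases by auto

lemma weight_eq_sum_out: "weightD {0..<n} A {1} f v = (\<Sum>y\<in>A `` {v}. f y)"
  by (rule weightD_1_eq_sum_out[OF irrefl_arcs arcs_subset])

lemma arc_from_neighbour: "(u, v) \<in> A \<Longrightarrow> u = cyc_succ v \<or> u = cyc_pred v"
  using arc_cases cyc_pred_succ by metis

lemma arc_to_neighbour: "(u, v) \<in> A \<Longrightarrow> v = cyc_succ u \<or> v = cyc_pred u"
  using arc_cases cyc_pred_succ by metis

lemma out_subset: "A `` {v} \<subseteq> {cyc_succ v, cyc_pred v}"
  by (auto dest: arc_to_neighbour)

lemma source_iff: "source v \<longleftrightarrow> v < n \<and> (\<forall>u. (u, v) \<notin> A)"
  unfolding is_source_def using arc_cases by fastforce

lemma sink_iff: "sink v \<longleftrightarrow> v < n \<and> A `` {v} = {}"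
  unfolding is_sink_def using arc_cases by fastforce

lemma source_out:
  assumes "source v"
  shows "A `` {v} = {cyc_succ v, cyc_pred v}"
proof -
  from assms have v: "v < n" "(cyc_succ v, v) \<notin> A" "(cyc_pred v, v) \<notin> A"
    by (auto simp: source_iff)
  then have "(v, cyc_succ v) \<in> A" "(v, cyc_pred v) \<in> A"
    using cycle_edge[OF v(1)] cycle_edge_pred[OF v(1)] by auto
  then show ?thesis using out_subset[of v] by auto
qed

lemma sink_in:
  assumes "sink t"
  shows "(cyc_succ t, t) \<in> A" "(cyc_pred t, t) \<in> A"
  using assms cycle_edge[of t] cycle_edge_pred[of t] by (auto simp: sink_iff)

lemma out_eq_singleton_if_not_source:
  assumes "(v, x) \<in> A" "\<not> source v"
  shows "A `` {v} = {x}"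
proof -
  obtain u where u: "(u, v) \<in> A"
    using assms arc_cases by (auto simp: source_iff)
  have "A `` {v} \<subseteq> {cyc_succ v, cyc_pred v} - {u}"
    using out_subset arc_antisym[OF u] by blast
  moreover have "u \<in> {cyc_succ v, cyc_pred v}"
    using arc_from_neighbour[OF u] by blast
  ultimately show ?thesis
    using assms(1) cyc_succ_neq_pred[of v] by blast
qed

lemma sink_if_common_out_neighbour:
  assumes "(u, x) \<in> A" "(w, x) \<in> A" "u \<noteq> w"
  shows "sink x"
proof -
  have "cyc_succ x \<noteq> cyc_pred x" by (rule cyc_succ_neq_pred)
  then have "{cyc_succ x, cyc_pred x} = {u, w}"
    using assms arc_from_neighbour[of u x] arc_from_neighbour[of w x] by auto
  moreover have "(x, u) \<notin> A" "(x, w) \<notin> A"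
    using arc_antisym assms(1,2) by auto
  ultimately have "A `` {x} = {}"
    using out_subset[of x] by auto
  then show ?thesis using arc_cases[OF assms(1)] by (simp add: sink_iff)
qed

lemma sink_after_forward_arc:
  assumes "k \<le> m" "(cyc_add b k, cyc_add b (Suc k)) \<in> A"
    "(cyc_add b m, cyc_add b (Suc m)) \<notin> A"
  shows "\<exists>j. k < j \<and> j \<le> m \<and> sink (cyc_add b j)"
proof -
  obtain i where i: "k \<le> i" "i < m" "(cyc_add b i, cyc_add b (Suc i)) \<in> A"
      "(cyc_add b (Suc i), cyc_add b (Suc (Suc i))) \<notin> A"
    using ex_switch_point[of k m "\<lambda>i. (cyc_add b i, cyc_add b (Suc i)) \<in> A"] assms by blast
  let ?v = "cyc_add b (Suc i)"
  have "cyc_succ ?v = cyc_add b (Suc (Suc i))" by (rule cyc_succ_add)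
  moreover have "cyc_pred ?v = cyc_add b i"
    using cyc_pred_succ[OF cyc_add_lt] cyc_succ_add by metis
  ultimately have "A `` {?v} = {}"
    using out_subset[of ?v] i(4) arc_antisym[OF i(3)] by auto
  then have "sink ?v" by (simp add: sink_iff cyc_add_lt)
  then show ?thesis using i by (intro exI[of _ "Suc i"]) simp
qed

lemma sink_exists:
  assumes "i < n" "(i, cyc_succ i) \<in> A" "j < n" "(j, cyc_succ j) \<notin> A"
  shows "\<exists>t. sink t"
proof -
  obtain m where "m < n" "j = cyc_add i m"
    using cyc_add_surj assms by blast
  moreover have "cyc_add i 0 = i" "cyc_add i (Suc 0) = cyc_succ i"
    using cyc_add_0[OF assms(1)] cyc_succ_add[of i 0] by auto
  ultimately show ?thesis
    using sink_after_forward_arc[of 0 m i] assms cyc_succ_add[of i m] by auto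
qed

lemma sink_between_sources:
  assumes "source b" "source (cyc_add b m)" "0 < m"
  shows "\<exists>j. 0 < j \<and> j < m \<and> sink (cyc_add b j)"
proof -
  have "b < n" using assms(1) by (simp add: source_iff)
  then have "(cyc_add b 0, cyc_add b (Suc 0)) \<in> A"
    using source_out[OF assms(1)] cyc_succ_add[of b 0] cyc_add_0 by auto
  moreover have "(cyc_add b (m - 1), cyc_add b (Suc (m - 1))) \<notin> A"
    using assms(2,3) by (simp add: source_iff)
  ultimately show ?thesis
    using sink_after_forward_arc[of 0 "m - 1" b] assms(3) by fastforce
qed

lemma source_unique_if_sink_unique:
  assumes sinks: "\<And>t t'. sink t \<Longrightarrow> sink t' \<Longrightarrow> t = t'"
    and "source v" "source w"
  shows "v = w"
proof (rule ccontr)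
  assume "v \<noteq> w"
  have v: "v < n" and w: "w < n" using assms(2,3) by (auto simp: source_iff)
  obtain m where m: "m < n" "w = cyc_add v m" using cyc_add_surj[OF v w] by blast
  with \<open>v \<noteq> w\<close> v have "0 < m" by (metis cyc_add_0 gr0I)
  have "v = cyc_add w (n - m)" using m v by (simp add: cyc_add_add cyc_add_n)
  obtain j where j: "0 < j" "j < m" "sink (cyc_add v j)"
    using sink_between_sources[OF assms(2)] m \<open>0 < m\<close> assms(3) by blast
  obtain j' where j': "0 < j'" "j' < n - m" "sink (cyc_add w j')"
    using sink_between_sources[OF assms(3)] \<open>v = cyc_add w (n - m)\<close> m assms(2) by force
  have "cyc_add v j = cyc_add v (m + j')"
    using sinks[OF j(3) j'(3)] m by (simp add: cyc_add_add)
  then have "j = m + j'" using cyc_add_inj j j' m by simp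
  then show False using j by simp
qed

lemma out_singleton_if_unidirectional:
  assumes "unidirectional n A" "v < n"
  shows "\<exists>x. A `` {v} = {x}"
proof -
  obtain \<sigma> where \<sigma>: "bij_betw \<sigma> {0..<n} {0..<n}"
    and A: "A = {(\<sigma> i, \<sigma> (Suc i mod n)) | i. i < n}"
    using assms(1) unfolding unidirectional_def by blast
  have "v \<in> \<sigma> ` {0..<n}" using \<sigma> assms(2) by (simp add: bij_betw_def)
  then obtain i where i: "i < n" "v = \<sigma> i" by auto
  have "A `` {v} = {\<sigma> (Suc i mod n)}"
    using i \<sigma> unfolding A bij_betw_def by (auto dest: inj_onD)
  then show ?thesis by blast
qed

lemma unidirectional_if_out:
  assumes \<sigma>: "bij_betw \<sigma> {0..<n} {0..<n}"
    and out: "\<And>i. i < n \<Longrightarrow> A `` {\<sigma> i} = {\<sigma> (cyc_succ i)}"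
  shows "unidirectional n A"
  unfolding unidirectional_def
proof (intro exI conjI)
  show "A = {(\<sigma> i, \<sigma> (Suc i mod n)) | i. i < n}"
  proof (intro equalityI subsetI)
    fix p assume "p \<in> A"
    then obtain u v where p: "p = (u, v)" "(u, v) \<in> A" by (cases p) auto
    have "u \<in> \<sigma> ` {0..<n}" using \<sigma> arc_cases[OF p(2)] by (simp add: bij_betw_def)
    then obtain i where "i < n" "u = \<sigma> i" by auto
    then show "p \<in> {(\<sigma> i, \<sigma> (Suc i mod n)) | i. i < n}"
      using p out by (auto simp: cyc_succ_eq)
  qed (use out in \<open>auto simp: cyc_succ_eq\<close>)
qed (rule \<sigma>)

lemma unidirectional_if_forward:
  assumes forward: "\<forall>i<n. (i, cyc_succ i) \<in> A"
  shows "unidirectional n A"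
proof (rule unidirectional_if_out[OF bij_betw_id])
  fix i assume i: "i < n"
  have "(cyc_pred i, i) \<in> A"
    using forward cyc_pred_lt cyc_succ_pred[OF i] by metis
  then have "(i, cyc_pred i) \<notin> A" by (rule arc_antisym)
  then show "A `` {id i} = {id (cyc_succ i)}"
    using out_subset[of i] forward i by auto
qed

lemma reflect_cyc_succ:
  assumes "i < n"
  shows "n - 1 - cyc_succ i = cyc_pred (n - 1 - i)"
proof (cases "Suc i = n")
  case True
  then show ?thesis by (simp add: cyc_succ_eq cyc_pred_def cyc_add_def)
next
  case False
  with assms have split: "n - 1 - i + (n - 1) = (n - 1 - Suc i) + n" by simp
  have "cyc_pred (n - 1 - i) = n - 1 - Suc i"
    unfolding cyc_pred_def cyc_add_def split using three_le_n by simp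
  with False assms show ?thesis by (simp add: cyc_succ_eq)
qed

lemma unidirectional_if_backward:
  assumes backward: "\<forall>i<n. (i, cyc_succ i) \<notin> A"
  shows "unidirectional n A"
proof (rule unidirectional_if_out)
  show "bij_betw (\<lambda>i. n - 1 - i) {0..<n} {0..<n}"
    by (rule bij_betw_byWitness[where f' = "\<lambda>i. n - 1 - i"]) auto
  fix i assume i: "i < n"
  let ?v = "n - 1 - i"
  have v: "?v < n" using i by simp
  have "(?v, cyc_pred ?v) \<in> A"
    using backward cycle_edge_pred[OF v] cyc_succ_pred[OF v] cyc_pred_lt by metis
  then show "A `` {?v} = {n - 1 - cyc_succ i}"
    unfolding reflect_cyc_succ[OF i] using out_subset[of ?v] backward v by auto
qed

lemma bij_betw_Suc_labels: "bij_betw Suc {0..<n} {1..card {0..<n}}"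
  by (simp add: bij_betw_def atLeastLessThanSuc_atLeastAtMost)

lemma common_sink_if_same_weight:
  assumes "inj_on f {0..<n}" "A `` {u} = {x}" "A `` {w} = {y}" "u \<noteq> w"
    and "weightD {0..<n} A {1} f u = weightD {0..<n} A {1} f w"
  shows "x = y \<and> sink x"
proof -
  have "(u, x) \<in> A" "(w, y) \<in> A" using assms(2,3) by auto
  moreover have "f x = f y" using assms(5) unfolding weight_eq_sum_out assms(2,3) by simp
  ultimately have "x = y" using inj_onD[OF assms(1)] arc_cases by auto
  with \<open>(u, x) \<in> A\<close> \<open>(w, y) \<in> A\<close> assms(4) show ?thesis
    using sink_if_common_out_neighbour by blast
qed

lemma antimagic_if_unidirectional:
  assumes "unidirectional n A"
  shows "D_antimagic {0..<n} A {1}"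
proof -
  have "inj_on (weightD {0..<n} A {1} Suc) {0..<n}"
  proof (rule inj_onI, rule ccontr)
    fix u w assume "u \<in> {0..<n}" "w \<in> {0..<n}" "u \<noteq> w"
      and "weightD {0..<n} A {1} Suc u = weightD {0..<n} A {1} Suc w"
    moreover obtain x y where "A `` {u} = {x}" "A `` {w} = {y}"
      using out_singleton_if_unidirectional[OF assms] \<open>u \<in> {0..<n}\<close> \<open>w \<in> {0..<n}\<close>
      by (meson atLeastLessThan_iff)
    ultimately have "sink x" using common_sink_if_same_weight[of Suc] by auto
    with out_singleton_if_unidirectional[OF assms, of x] show False by (auto simp: sink_iff)
  qed
  then show ?thesis
    unfolding D_antimagic_def D_antimagic_labeling_def using bij_betw_Suc_labels by blast
qed

lemma inj_on_weight_if_theta: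
  assumes sources: "{v. source v} = {s}" and sinks: "{v. sink v} = {t}" and st: "(s, t) \<in> A"
    and f: "bij_betw f {0..<n} {1..n}" and f_t: "f t = n"
  shows "inj_on (weightD {0..<n} A {1} f) {0..<n}"
proof -
  define W where "W = weightD {0..<n} A {1} f"
  have W_eq: "W v = (\<Sum>y\<in>A `` {v}. f y)" for v
    unfolding W_def by (rule weight_eq_sum_out)
  have s: "source s" and t: "sink t" using sources sinks by auto
  have f_range: "1 \<le> f x \<and> f x \<le> n" if "x < n" for x
    using bij_betw_apply[OF f] that by auto
  have W_t: "W t = 0" using t by (simp add: W_eq sink_iff)
  have W_s: "n < W s"
  proof -
    have "W s = f (cyc_succ s) + f (cyc_pred s)"
      using source_out[OF s] cyc_succ_neq_pred by (simp add: W_eq)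
    moreover have "f (cyc_succ s) = n \<or> f (cyc_pred s) = n"
      using arc_to_neighbour[OF st] f_t by metis
    moreover have "1 \<le> f (cyc_succ s)" "1 \<le> f (cyc_pred s)"
      using f_range cyc_succ_lt cyc_pred_lt by auto
    ultimately show ?thesis by linarith
  qed
  have out_inner: "\<exists>x. x < n \<and> A `` {v} = {x}" if "v < n" "v \<noteq> s" "v \<noteq> t" for v
  proof -
    have "\<not> source v" "\<not> sink v" using that sources sinks by auto
    then obtain x where "(v, x) \<in> A" using \<open>v < n\<close> by (auto simp: sink_iff)
    with out_eq_singleton_if_not_source \<open>\<not> source v\<close> arc_cases show ?thesis by blast
  qed
  have W_inner: "1 \<le> W v \<and> W v \<le> n" if "v < n" "v \<noteq> s" "v \<noteq> t" for v
    using out_inner[OF that] f_range by (auto simp: W_eq)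
  have "s \<noteq> t" using st irrefl_arcs by (auto simp: irrefl_def)
  have W_zero_iff: "W v = 0 \<longleftrightarrow> v = t" if "v < n" for v
    using W_t W_s W_inner[OF that] \<open>s \<noteq> t\<close> by (cases "v = s \<or> v = t") auto
  have W_large_iff: "n < W v \<longleftrightarrow> v = s" if "v < n" for v
    using W_t W_s W_inner[OF that] \<open>s \<noteq> t\<close> by (cases "v = s \<or> v = t") auto
  show ?thesis
    unfolding W_def[symmetric]
  proof (rule inj_onI, rule ccontr)
    fix u w assume u: "u \<in> {0..<n}" and w: "w \<in> {0..<n}" and "u \<noteq> w" and eq: "W u = W w"
    then have inner: "u \<notin> {s, t}" "w \<notin> {s, t}"
      using W_zero_iff[of u] W_zero_iff[of w] W_large_iff[of u] W_large_iff[of w] by auto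
    then obtain x y where x: "A `` {u} = {x}" and y: "A `` {w} = {y}"
      using out_inner u w by (metis atLeastLessThan_iff insertCI)
    then have "x = y" "sink x"
      using common_sink_if_same_weight[OF bij_betw_imp_inj_on[OF f]] \<open>u \<noteq> w\<close> eq
      unfolding W_def by blast+
    then have "x = t" using sinks by auto
    with x y \<open>x = y\<close> have "{u, w, s} \<subseteq> {cyc_succ t, cyc_pred t}"
      using arc_from_neighbour st by blast
    then show False using \<open>u \<noteq> w\<close> inner by auto
  qed
qed

lemma antimagic_if_theta_oriented:
  assumes "theta_oriented n A"
  shows "D_antimagic {0..<n} A {1}"
proof -
  obtain s t where sources: "{v. source v} = {s}" and sinks: "{v. sink v} = {t}"
    and adjacent: "(s, t) \<in> A \<or> (t, s) \<in> A"
    using assms unfolding theta_oriented_def by blast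
  have "t < n" and st: "(s, t) \<in> A" using sinks adjacent by (auto simp: sink_iff)
  define f where "f = Suc \<circ> transpose t (n - 1)"
  have f: "bij_betw f {0..<n} {1..card {0..<n}}"
    unfolding f_def using \<open>t < n\<close> bij_betw_Suc_labels
    by (intro bij_betw_trans[of _ _ "{0..<n}"]) auto
  moreover have "f t = n" using three_le_n by (simp add: f_def)
  ultimately have "inj_on (weightD {0..<n} A {1} f) {0..<n}"
    using inj_on_weight_if_theta[OF sources sinks st] by simp
  with f show ?thesis unfolding D_antimagic_def D_antimagic_labeling_def by blast
qed

lemma sink_unique_if_antimagic:
  assumes "D_antimagic_labeling {0..<n} A {1} f" "sink t" "sink t'"
  shows "t = t'"
proof -
  have "weightD {0..<n} A {1} f t = weightD {0..<n} A {1} f t'"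
    using assms(2,3) unfolding weight_eq_sum_out by (simp add: sink_iff)
  then show ?thesis
    using assms unfolding D_antimagic_labeling_def by (auto simp: sink_iff dest: inj_onD)
qed

lemma source_next_to_sink_if_antimagic:
  assumes f: "D_antimagic_labeling {0..<n} A {1} f" and t: "sink t"
  shows "source (cyc_succ t) \<or> source (cyc_pred t)"
proof (rule ccontr)
  assume "\<not> ?thesis"
  then have "A `` {cyc_succ t} = {t}" "A `` {cyc_pred t} = {t}"
    using out_eq_singleton_if_not_source sink_in[OF t] by auto
  then have "weightD {0..<n} A {1} f (cyc_succ t) = weightD {0..<n} A {1} f (cyc_pred t)"
    unfolding weight_eq_sum_out by simp
  then have "cyc_succ t = cyc_pred t"
    using f cyc_succ_lt cyc_pred_lt unfolding D_antimagic_labeling_def by (auto dest: inj_onD)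
  then show False using cyc_succ_neq_pred by blast
qed

lemma unidirectional_or_theta_oriented_if_antimagic:
  assumes "D_antimagic {0..<n} A {1}"
  shows "unidirectional n A \<or> theta_oriented n A"
proof -
  obtain f where f: "D_antimagic_labeling {0..<n} A {1} f"
    using assms unfolding D_antimagic_def by blast
  consider "\<forall>i<n. (i, cyc_succ i) \<in> A" | "\<forall>i<n. (i, cyc_succ i) \<notin> A"
    | i j where "i < n" "(i, cyc_succ i) \<in> A" "j < n" "(j, cyc_succ j) \<notin> A"
    by blast
  then show ?thesis
  proof cases
    case 3
    then obtain t where t: "sink t" using sink_exists by blast
    then have sinks: "{v. sink v} = {t}"
      using sink_unique_if_antimagic[OF f] by blast
    obtain s where s: "source s" "s = cyc_succ t \<or> s = cyc_pred t"
      using source_next_to_sink_if_antimagic[OF f t] by blast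
    have "{v. source v} = {s}"
      using source_unique_if_sink_unique sink_unique_if_antimagic[OF f] s(1) by blast
    moreover have "(s, t) \<in> A" using s(2) sink_in[OF t] by blast
    ultimately show ?thesis unfolding theta_oriented_def using sinks by blast
  qed (use unidirectional_if_forward unidirectional_if_backward in blast)+
qed

end

theorem mainTheorem4:
  fixes n :: nat and A :: "(nat \<times> nat) set"
  assumes "n \<ge> 3" and "oriented_cycle n A"
  shows "D_antimagic {0..<n} A {1} \<longleftrightarrow> unidirectional n A \<or> theta_oriented n A"
proof -
  interpret oriented_cycle_graph n A using assms by unfold_locales
  show ?thesis
    using unidirectional_or_theta_oriented_if_antimagic antimagic_if_unidirectional
      antimagic_if_theta_oriented by blast
qed

end
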